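(* Under the hypotheses of the two preceding theorems (discrepancy principle with fixed $1<\underline\tau\le\overline\tau<\infty$, $\varphi^\dagger$ satisfying the VSC with $\sigma\in(0,1]$ and a concave increasing index function $\Psi$), $$D^{\mathrm{sym}}_J(\varphi^\delta_{\alpha(\delta,f^\delta)},\varphi^\dagger)=\mathcal O(\Psi(\delta))\quad\text{as }\delta\to0.$$
   Context: $\mathcal V$ Banach, $\mathcal H$ Hilbert, $\mathcal T:\mathcal V\to\mathcal H$ bounded linear injective compact; $J:\mathcal V\to[0,\infty)$ convex; Bregman distance $D_J(u,u^* )=J(u)-J(u^* )-\langle p,u-u^*\rangle$ for $p\in\partial J(u^* )$, and symmetric Bregman distance $D_J^{\mathrm{sym}}(u,u^* )=D_J(u,u^* )+D_J(u^*,u)$; here $D_J(\varphi^\dagger,\varphi^\delta_\alpha)$ uses the subgradient $\frac1\alpha\mathcal T^*(f^\delta-\mathcal T\varphi^\delta_\alpha)\in\partial J(\varphi^\delta_\alpha)$. Noise level $\delta>0$, $\|f^\dagger-f^\delta\|\le\delta$; $\varphi^\delta_\alpha$ minimizes $\frac12\|\mathcal T\varphi-f^\delta\|^2+\alpha J(\varphi)$; $\varphi^\dagger$ is a $J$-minimizing solution of $\mathcal T\varphi=f^\dagger$. Discrepancy principle: $\underline\tau\delta\le\|\mathcal T\varphi^\delta_{\alpha(\delta,f^\delta)}-f^\delta\|\le\overline\tau\delta$. VSC: there exist $\sigma\in(0,1]$ and a concave index function $\Psi$ (continuous, increasing, $\Psi(0)=0$) with $\frac\sigma2D_J(\varphi,\varphi^\dagger)\le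 J(\varphi)-J(\varphi^\dagger)+\Psi(\|\mathcal T\varphi-\mathcal T\varphi^\dagger\|)$ for all $\varphi$. *)

theory Defs
  imports "HOL-Analysis.Analysis"
begin

definition compact_operator :: "('v::real_normed_vector \<Rightarrow> 'h::real_normed_vector) \<Rightarrow> bool" where
  "compact_operator T \<longleftrightarrow> bounded_linear T \<and> compact (closure (T ` cball 0 1))"

definition subdiff :: "('v::real_normed_vector \<Rightarrow> real) \<Rightarrow> 'v \<Rightarrow> ('v \<Rightarrow> real) set" where
  "subdiff J u = {p. bounded_linear p \<and> (\<forall>v. J u + p (v - u) \<le> J v)}"

definition bregman :: "('v::real_normed_vector \<Rightarrow> real) \<Rightarrow> ('v \<Rightarrow> real) \<Rightarrow> 'v \<Rightarrow> 'v \<Rightarrow> real" where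
  "bregman J p u u' = J u - J u' - p (u - u')"

definition bregman_sym :: "('v::real_normed_vector \<Rightarrow> real) \<Rightarrow> ('v \<Rightarrow> real) \<Rightarrow> ('v \<Rightarrow> real) \<Rightarrow> 'v \<Rightarrow> 'v \<Rightarrow> real" where
  "bregman_sym J p q u v = bregman J q u v + bregman J p v u"

definition tikhonov_minimizer ::
  "('v \<Rightarrow> 'h::real_normed_vector) \<Rightarrow> ('v \<Rightarrow> real) \<Rightarrow> 'h \<Rightarrow> real \<Rightarrow> 'v \<Rightarrow> bool" where
  "tikhonov_minimizer T J f \<alpha> \<phi> \<longleftrightarrow>
     (\<forall>\<psi>. (norm (T \<phi> - f))\<^sup>2 / 2 + \<alpha> * J \<phi> \<le> (norm (T \<psi> - f))\<^sup>2 / 2 + \<alpha> * J \<psi>)"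

definition J_min_solution :: "('v \<Rightarrow> 'h) \<Rightarrow> ('v \<Rightarrow> real) \<Rightarrow> 'h \<Rightarrow> 'v \<Rightarrow> bool" where
  "J_min_solution T J f \<phi> \<longleftrightarrow> T \<phi> = f \<and> (\<forall>\<psi>. T \<psi> = f \<longrightarrow> J \<phi> \<le> J \<psi>)"

definition concave_index_function :: "(real \<Rightarrow> real) \<Rightarrow> bool" where
  "concave_index_function \<Psi> \<longleftrightarrow> continuous_on {0..} \<Psi> \<and> strict_mono_on {0..} \<Psi> \<and>
     \<Psi> 0 = 0 \<and> concave_on {0..} \<Psi>"

end

theory Submission
  imports Defs
begin

text \<open>Comparing the Tikhonov functional at \<open>\<phi>\<close> with its value at \<open>\<phi>\<^sup>\<dagger>\<close> and using the lower
  discrepancy bound \<open>\<tau>_lo \<delta>\<close> with \<open>\<tau>_lo > 1\<close> shows that \<open>J\<close> drops from \<open>\<phi>\<^sup>\<dagger>\<close> to \<open>\<phi>\<close> by at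
  least \<open>(\<tau>_lo\<^sup>2 - 1) \<delta>\<^sup>2 / 2\<alpha>\<close>. The upper discrepancy bound makes the residual
  \<open>\<parallel>T \<phi> - T \<phi>\<^sup>\<dagger>\<parallel>\<close> of order \<open>\<delta>\<close>, so by concavity the \<open>\<Psi>\<close>-term of the VSC is \<open>O(\<Psi> \<delta>)\<close>;
  since the drop has a sign, the VSC then bounds both the primal Bregman distance and the drop
  by \<open>O(\<Psi> \<delta>)\<close>. Hence \<open>\<delta>\<^sup>2/\<alpha> = O(\<Psi> \<delta>)\<close>, which controls the inner-product part of the dual
  Bregman distance, of size \<open>\<delta> \<cdot> \<delta> / \<alpha>\<close> by Cauchy-Schwarz.\<close>

lemma bregman_nonneg:
  assumes "p \<in> subdiff J u"
  shows "0 \<le> bregman J p v u"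
proof -
  have "J u + p (v - u) \<le> J v"
    using assms by (simp add: subdiff_def)
  then show ?thesis
    by (simp add: bregman_def)
qed

lemma bregman_tikhonov_subgradient:
  assumes "linear T"
  shows "bregman J (\<lambda>w. inner (f - T \<phi>) (T w) / \<alpha>) u \<phi>
           = J u - J \<phi> - inner (f - T \<phi>) (T u - T \<phi>) / \<alpha>"
  using linear_diff[OF assms] by (simp add: bregman_def)

lemma concave_index_function_mono:
  assumes "concave_index_function \<Psi>" "0 \<le> x" "x \<le> y"
  shows "\<Psi> x \<le> \<Psi> y"
  using assms unfolding concave_index_function_def
  by (meson atLeast_iff order_trans strict_mono_on_leD)

lemma concave_index_function_scale:
  assumes \<Psi>: "concave_index_function \<Psi>" and K: "1 \<le> K" and d: "0 \<le> d"
  shows "\<Psi> (K * d) \<le> K * \<Psi> d"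
proof -
  have "concave_on {0..} \<Psi>" and "\<Psi> 0 = 0"
    using \<Psi> by (auto simp: concave_index_function_def)
  then have "(1 / K) * \<Psi> (K * d) \<le> \<Psi> ((1 - 1/K) *\<^sub>R 0 + (1/K) *\<^sub>R (K * d))"
    using concave_onD[of "{0..}" \<Psi> "1/K" 0 "K * d"] K d by simp
  also have "(1 - 1/K) *\<^sub>R 0 + (1/K) *\<^sub>R (K * d) = d"
    using K by simp
  finally show ?thesis
    using K by (simp add: field_simps)
qed

lemma tikhonov_discrepancy_penalty_gap:
  assumes "tikhonov_minimizer T J f \<alpha> \<phi>" and "norm (T u - f) \<le> \<delta>"
    and "\<tau> * \<delta> \<le> norm (T \<phi> - f)" and "0 \<le> \<tau>" and "0 \<le> \<delta>"
  shows "(\<tau>\<^sup>2 - 1) * \<delta>\<^sup>2 \<le> 2 * \<alpha> * (J u - J \<phi>)"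
proof -
  have "(norm (T \<phi> - f))\<^sup>2 / 2 + \<alpha> * J \<phi> \<le> (norm (T u - f))\<^sup>2 / 2 + \<alpha> * J u"
    using assms(1) unfolding tikhonov_minimizer_def by blast
  moreover have "(norm (T u - f))\<^sup>2 \<le> \<delta>\<^sup>2"
    using assms(2) by (simp add: power_mono)
  moreover have "(\<tau> * \<delta>)\<^sup>2 \<le> (norm (T \<phi> - f))\<^sup>2"
    using assms(3-5) by (simp add: power_mono)
  ultimately show ?thesis
    by (simp add: power_mult_distrib algebra_simps)
qed

lemma vsc_bregman_bound:
  assumes "\<sigma> / 2 * bregman J p \<phi> u \<le> J \<phi> - J u + \<Psi>r"
    and "J \<phi> \<le> J u" and "\<Psi>r \<le> A" and "0 < \<sigma>"
  shows "bregman J p \<phi> u \<le> 2 / \<sigma> * A"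
proof -
  have "\<sigma> / 2 * bregman J p \<phi> u \<le> A"
    using assms(1-3) by linarith
  then show ?thesis
    using assms(4) by (simp add: field_simps)
qed

lemma vsc_penalty_gap_bound:
  assumes "\<sigma> / 2 * bregman J p \<phi> u \<le> J \<phi> - J u + \<Psi>r"
    and "p \<in> subdiff J u" and "\<Psi>r \<le> A" and "0 < \<sigma>"
  shows "J u - J \<phi> \<le> A"
proof -
  have "0 \<le> \<sigma> / 2 * bregman J p \<phi> u"
    using bregman_nonneg[OF assms(2)] assms(4) by simp
  then show ?thesis
    using assms(1,3) by linarith
qed

lemma tikhonov_dual_bregman_bound:
  fixes T :: "'v::real_normed_vector \<Rightarrow> 'h::real_inner"
  assumes "linear T" and "J \<phi> \<le> J u" and "0 < \<alpha>"
    and "norm (T \<phi> - f) \<le> r" and "norm (T u - T \<phi>) \<le> s"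
  shows "\<bar>bregman J (\<lambda>w. inner (f - T \<phi>) (T w) / \<alpha>) u \<phi>\<bar> \<le> J u - J \<phi> + r * s / \<alpha>"
proof -
  have "\<bar>inner (f - T \<phi>) (T u - T \<phi>)\<bar> \<le> norm (f - T \<phi>) * norm (T u - T \<phi>)"
    by (rule Cauchy_Schwarz_ineq2)
  also have "\<dots> \<le> r * s"
    using assms(4,5) order_trans[OF norm_ge_zero assms(4)]
    by (intro mult_mono) (auto simp: norm_minus_commute)
  finally have "\<bar>inner (f - T \<phi>) (T u - T \<phi>) / \<alpha>\<bar> \<le> r * s / \<alpha>"
    using assms(3) by (simp add: divide_right_mono)
  then show ?thesis
    unfolding bregman_tikhonov_subgradient[OF assms(1)] using assms(2) by linarith
qed

lemma discrepancy_bregman_sym_bound: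
  fixes T :: "'v::real_normed_vector \<Rightarrow> 'h::real_inner"
  assumes T: "linear T" and p_dag: "p_dag \<in> subdiff J phi_dag"
    and \<sigma>: "0 < \<sigma>" and \<Psi>: "concave_index_function \<Psi>"
    and VSC: "\<sigma> / 2 * bregman J p_dag \<phi> phi_dag
                \<le> J \<phi> - J phi_dag + \<Psi> (norm (T \<phi> - T phi_dag))"
    and \<tau>: "1 < \<tau>_lo" "0 \<le> \<tau>_up"
    and \<delta>: "0 < \<delta>" "norm (T phi_dag - f) \<le> \<delta>" and \<alpha>: "0 < \<alpha>"
    and tik: "tikhonov_minimizer T J f \<alpha> \<phi>"
    and lo: "\<tau>_lo * \<delta> \<le> norm (T \<phi> - f)" and up: "norm (T \<phi> - f) \<le> \<tau>_up * \<delta>"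
  shows "\<bar>bregman_sym J (\<lambda>u. inner (f - T \<phi>) (T u) / \<alpha>) p_dag \<phi> phi_dag\<bar>
           \<le> (1 + \<tau>_up) * (2 / \<sigma> + 1 + 2 * \<tau>_up * (1 + \<tau>_up) / (\<tau>_lo\<^sup>2 - 1)) * \<Psi> \<delta>"
proof -
  define K where "K = 1 + \<tau>_up"
  define A where "A = K * \<Psi> \<delta>"
  have K: "1 \<le> K"
    using \<tau> by (simp add: K_def)
  have gap: "(\<tau>_lo\<^sup>2 - 1) * \<delta>\<^sup>2 \<le> 2 * \<alpha> * (J phi_dag - J \<phi>)"
    using tikhonov_discrepancy_penalty_gap[OF tik \<delta>(2) lo] \<tau> \<delta> by simp
  have \<tau>_lo2: "0 < \<tau>_lo\<^sup>2 - 1"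
    using \<tau> by (simp add: power_strict_mono[of 1 \<tau>_lo 2, simplified])
  have "0 < \<alpha> * (J phi_dag - J \<phi>)"
    using gap mult_pos_pos[OF \<tau>_lo2 zero_less_power[OF \<delta>(1), of 2]] by linarith
  then have J_le: "J \<phi> \<le> J phi_dag"
    using \<alpha> by (simp add: zero_less_mult_iff)
  have residual: "norm (T \<phi> - T phi_dag) \<le> K * \<delta>"
    using norm_triangle_ineq[of "T \<phi> - f" "f - T phi_dag"] up \<delta>(2)
    by (simp add: K_def norm_minus_commute algebra_simps)
  have \<Psi>_residual: "\<Psi> (norm (T \<phi> - T phi_dag)) \<le> A"
    using concave_index_function_mono[OF \<Psi> norm_ge_zero residual]
      concave_index_function_scale[OF \<Psi> K, of \<delta>] \<delta> by (simp add: A_def)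
  have D_primal: "\<bar>bregman J p_dag \<phi> phi_dag\<bar> \<le> 2 / \<sigma> * A"
    using vsc_bregman_bound[OF VSC J_le \<Psi>_residual \<sigma>] bregman_nonneg[OF p_dag] by simp
  have J_gap: "J phi_dag - J \<phi> \<le> A"
    using vsc_penalty_gap_bound[OF VSC p_dag \<Psi>_residual \<sigma>] .
  have "2 * \<alpha> * (J phi_dag - J \<phi>) \<le> 2 * \<alpha> * A"
    using J_gap \<alpha> by simp
  then have "\<delta>\<^sup>2 / \<alpha> \<le> 2 * A / (\<tau>_lo\<^sup>2 - 1)"
    using gap \<alpha> \<tau>_lo2 by (simp add: field_simps)
  then have "\<tau>_up * K * (\<delta>\<^sup>2 / \<alpha>) \<le> \<tau>_up * K * (2 * A / (\<tau>_lo\<^sup>2 - 1))"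
    using \<tau> K by (intro mult_left_mono) auto
  then have "\<tau>_up * \<delta> * (K * \<delta>) / \<alpha> \<le> \<tau>_up * K * (2 * A / (\<tau>_lo\<^sup>2 - 1))"
    by (simp add: power2_eq_square mult_ac)
  moreover have "\<bar>bregman J (\<lambda>u. inner (f - T \<phi>) (T u) / \<alpha>) phi_dag \<phi>\<bar>
                   \<le> J phi_dag - J \<phi> + \<tau>_up * \<delta> * (K * \<delta>) / \<alpha>"
    using tikhonov_dual_bregman_bound[OF T J_le \<alpha> up] residual by (simp add: norm_minus_commute)
  ultimately have "\<bar>bregman_sym J (\<lambda>u. inner (f - T \<phi>) (T u) / \<alpha>) p_dag \<phi> phi_dag\<bar>
                     \<le> 2 / \<sigma> * A + A + \<tau>_up * K * (2 * A / (\<tau>_lo\<^sup>2 - 1))"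
    using D_primal J_gap unfolding bregman_sym_def by linarith
  also have "\<dots> = K * (2 / \<sigma> + 1 + 2 * \<tau>_up * K / (\<tau>_lo\<^sup>2 - 1)) * \<Psi> \<delta>"
    by (simp add: A_def field_simps)
  finally show ?thesis
    unfolding K_def .
qed

theorem mainTheorem9:
  fixes T :: "'v::banach \<Rightarrow> 'h::{real_inner,complete_space}"
    and J :: "'v \<Rightarrow> real"
    and f_dag :: 'h and phi_dag :: 'v and p_dag :: "'v \<Rightarrow> real"
    and \<sigma> \<tau>_lo \<tau>_up :: real and \<Psi> :: "real \<Rightarrow> real"
  assumes T_lin: "bounded_linear T" and T_inj: "inj T" and T_cpt: "compact_operator T"
    and J_nonneg: "\<And>\<phi>. J \<phi> \<ge> 0" and J_convex: "convex_on UNIV J"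
    and sol: "J_min_solution T J f_dag phi_dag"
    and p_dag: "p_dag \<in> subdiff J phi_dag"
    and \<sigma>: "0 < \<sigma>" "\<sigma> \<le> 1"
    and \<Psi>: "concave_index_function \<Psi>"
    and VSC: "\<And>\<phi>. \<sigma> / 2 * bregman J p_dag \<phi> phi_dag
                 \<le> J \<phi> - J phi_dag + \<Psi> (norm (T \<phi> - T phi_dag))"
    and \<tau>: "1 < \<tau>_lo" "\<tau>_lo \<le> \<tau>_up"
  shows "\<exists>C \<delta>\<^sub>0. \<delta>\<^sub>0 > 0 \<and>
    (\<forall>\<delta> f \<alpha> \<phi>. 0 < \<delta> \<longrightarrow> \<delta> \<le> \<delta>\<^sub>0 \<longrightarrow> norm (f_dag - f) \<le> \<delta> \<longrightarrow> 0 < \<alpha> \<longrightarrow>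
       tikhonov_minimizer T J f \<alpha> \<phi> \<longrightarrow>
       \<tau>_lo * \<delta> \<le> norm (T \<phi> - f) \<longrightarrow> norm (T \<phi> - f) \<le> \<tau>_up * \<delta> \<longrightarrow>
       \<bar>bregman_sym J (\<lambda>u. inner (f - T \<phi>) (T u) / \<alpha>) p_dag \<phi> phi_dag\<bar> \<le> C * \<Psi> \<delta>)"
proof -
  \<comment> \<open>The bound holds for every \<open>\<delta> > 0\<close>, so \<open>\<delta>\<^sub>0\<close> is arbitrary.\<close>
  have "T phi_dag = f_dag"
    using sol by (simp add: J_min_solution_def)
  moreover have "0 \<le> \<tau>_up"
    using \<tau> by simp
  ultimately show ?thesis
    using discrepancy_bregman_sym_bound[OF bounded_linear.linear[OF T_lin] p_dag \<sigma>(1) \<Psi> VSC \<tau>(1)]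
    by (intro exI[of _ 1] exI) auto
qed

end
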